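(* Let $\mathcal{I}$ be a distributive interval hypergraph on $[n]$, $A$ an acyclic orientation of $\mathcal{I}$, and $J\in\mathcal{I}$ with $j=A(J)\ne\min(J)$. Then there exists $i$ with \[ \min(J)\le i\le\max\{\max(I): I\in\mathcal{I},\ \min(I)=\min(J),\ \max(I)<j\} \] such that the orientation $B$ obtained from $A$ by flipping $j$ to $i$ (i.e. $B(H)=i$ if $A(H)=j$ and $i\in H$, and $B(H)=A(H)$ otherwise) is acyclic.
   Context: An interval hypergraph $\mathcal{I}$ on $[n]$ is a collection of intervals of $[n]$ containing all singletons. It is distributive if for all $I,J\in\mathcal{I}$ with $I\not\subseteq J$, $I\not\supseteq J$ and $I\cap J\ne\varnothing$, the intersection $I\cap J$ is in $\mathcal{I}$ and is initial or final (i.e. shares its minimum or its maximum) in every $K\in\mathcal{I}$ with $I\cap J\subseteq K$. An orientation is a map $O:\mathcal{I}\to[n]$ with $O(I)\in I$; it is acyclic if there are no $H_1,\dots,H_k$, $k\ge2$, with $O(H_{i+1})\in H_i\setminus\{O(H_i)\}$ for $i\in[k-1]$ and $O(H_1)\in H_k\setminus\{O(H_k)\}$. *)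

theory Defs
  imports Main
begin

definition is_interval :: "nat \<Rightarrow> nat set \<Rightarrow> bool" where
  "is_interval n I \<longleftrightarrow> (\<exists>a b. 1 \<le> a \<and> a \<le> b \<and> b \<le> n \<and> I = {a..b})"

definition interval_hypergraph :: "nat \<Rightarrow> nat set set \<Rightarrow> bool" where
  "interval_hypergraph n \<I> \<longleftrightarrow>
     (\<forall>I\<in>\<I>. is_interval n I) \<and> (\<forall>k\<in>{1..n}. {k} \<in> \<I>)"

definition initial_or_final :: "nat set \<Rightarrow> nat set \<Rightarrow> bool" where
  "initial_or_final X K \<longleftrightarrow> Min X = Min K \<or> Max X = Max K"

definition distributive :: "nat \<Rightarrow> nat set set \<Rightarrow> bool" where
  "distributive n \<I> \<longleftrightarrow> interval_hypergraph n \<I> \<and>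
     (\<forall>I\<in>\<I>. \<forall>J\<in>\<I>. \<not> I \<subseteq> J \<and> \<not> J \<subseteq> I \<and> I \<inter> J \<noteq> {} \<longrightarrow>
        I \<inter> J \<in> \<I> \<and> (\<forall>K\<in>\<I>. I \<inter> J \<subseteq> K \<longrightarrow> initial_or_final (I \<inter> J) K))"

definition orientation :: "nat set set \<Rightarrow> (nat set \<Rightarrow> nat) \<Rightarrow> bool" where
  "orientation \<I> Or \<longleftrightarrow> (\<forall>I\<in>\<I>. Or I \<in> I)"

definition acyclic_orientation :: "nat set set \<Rightarrow> (nat set \<Rightarrow> nat) \<Rightarrow> bool" where
  "acyclic_orientation \<I> Or \<longleftrightarrow> orientation \<I> Or \<and>
     \<not> (\<exists>k (Hs :: nat \<Rightarrow> nat set). k \<ge> 2 \<and> (\<forall>i<k. Hs i \<in> \<I>) \<and>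
          (\<forall>i<k. Or (Hs ((i + 1) mod k)) \<in> Hs i - {Or (Hs i)}))"

definition flip :: "(nat set \<Rightarrow> nat) \<Rightarrow> nat \<Rightarrow> nat \<Rightarrow> nat set \<Rightarrow> nat" where
  "flip A j i = (\<lambda>H. if A H = j \<and> i \<in> H then i else A H)"

end

(* Call u \<rightarrow> v an arc of an orientation when v is the head of an edge containing u; the
   orientation is acyclic iff this digraph is. Flipping j to i only redirects arcs into i, so the
   flipped orientation stays acyclic as soon as no edge G through i has a head A G \<notin> {i, j} from
   which j is reachable: then no new cycle passes through i, and cycles avoiding i are old ones.

   With bound the upper limit of the statement, {Min J..bound} is an edge. Choose i in it such that
   no point of {Min J..bound} is reachable from i. Distributivity forces an edge G through i that
   misses j = A J to end at or before bound, so its head, being reachable from i, lies below Min J.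
   Then G \<inter> J = {Min J..Max G} is an edge which every edge containing it must start or end with,
   so no edge reaches both below Min J and beyond bound; hence everything reachable from the head
   of G stays below Min J < j. *)

theory Submission
  imports Defs
begin

definition arc :: "nat set set \<Rightarrow> (nat set \<Rightarrow> nat) \<Rightarrow> nat \<Rightarrow> nat \<Rightarrow> bool" where
  "arc \<I> Or u v \<longleftrightarrow> (\<exists>G\<in>\<I>. u \<in> G \<and> Or G = v \<and> u \<noteq> v)"

lemma tranclp_cycle_iff:
  "(\<exists>x. r\<^sup>+\<^sup>+ x x) \<longleftrightarrow> (\<exists>k f. k \<ge> 1 \<and> (\<forall>i<k. r (f i) (f (Suc i mod k))))"
proof
  assume "\<exists>x. r\<^sup>+\<^sup>+ x x"
  then obtain x k where "k > 0" "(r ^^ k) x x"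
    by (auto simp: tranclp_power)
  then obtain f where f: "f 0 = x" "f k = x" "\<forall>i<k. r (f i) (f (Suc i))"
    by (auto simp: relpowp_fun_conv)
  have "r (f i) (f (Suc i mod k))" if "i < k" for i
  proof (cases "Suc i = k")
    case True
    then show ?thesis using f that by auto
  next
    case False
    then show ?thesis using f that by simp
  qed
  with \<open>k > 0\<close> show "\<exists>k f. k \<ge> 1 \<and> (\<forall>i<k. r (f i) (f (Suc i mod k)))"
    by (intro exI[of _ k] exI[of _ f]) auto
next
  assume "\<exists>k f. k \<ge> 1 \<and> (\<forall>i<k. r (f i) (f (Suc i mod k)))"
  then obtain k f where "k \<ge> 1" "\<forall>i<k. r (f i) (f (Suc i mod k))"
    by blast
  then have "(r ^^ k) (f 0) (f 0)"
    unfolding relpowp_fun_conv by (intro exI[of _ "\<lambda>i. f (i mod k)"]) auto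
  with \<open>k \<ge> 1\<close> have "r\<^sup>+\<^sup>+ (f 0) (f 0)"
    unfolding tranclp_power by (intro exI[of _ k]) simp
  then show "\<exists>x. r\<^sup>+\<^sup>+ x x" ..
qed

lemma acyclic_orientation_iff_arc:
  "acyclic_orientation \<I> Or \<longleftrightarrow> orientation \<I> Or \<and> (\<forall>x. \<not> (arc \<I> Or)\<^sup>+\<^sup>+ x x)"
proof -
  have "(\<exists>k::nat. \<exists>Hs. k \<ge> 2 \<and> (\<forall>i<k. Hs i \<in> \<I>) \<and> (\<forall>i<k. Or (Hs ((i + 1) mod k)) \<in> Hs i - {Or (Hs i)}))
      \<longleftrightarrow> (\<exists>k::nat. \<exists>f. k \<ge> 1 \<and> (\<forall>i<k. (arc \<I> Or)\<inverse>\<inverse> (f i) (f (Suc i mod k))))"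
    (is "?edge_cycle \<longleftrightarrow> ?arc_cycle")
  proof
    assume ?edge_cycle
    then obtain k Hs where "k \<ge> 2" "\<forall>i<k. Hs i \<in> \<I>"
      and "\<forall>i<k. Or (Hs (Suc i mod k)) \<in> Hs i - {Or (Hs i)}"
      by auto
    then have "\<forall>i<k. (arc \<I> Or)\<inverse>\<inverse> (Or (Hs i)) (Or (Hs (Suc i mod k)))"
      unfolding arc_def by auto
    with \<open>k \<ge> 2\<close> show ?arc_cycle
      by (intro exI[of _ k] exI[of _ "\<lambda>i. Or (Hs i)"]) auto
  next
    assume ?arc_cycle
    then obtain k f where "k \<ge> 1"
      and "\<forall>i<k. \<exists>G\<in>\<I>. f (Suc i mod k) \<in> G \<and> Or G = f i \<and> f (Suc i mod k) \<noteq> f i"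
      unfolding arc_def by auto
    then obtain Hs where Hs: "\<forall>i<k. Hs i \<in> \<I> \<and> f (Suc i mod k) \<in> Hs i \<and> Or (Hs i) = f i
        \<and> f (Suc i mod k) \<noteq> f i"
      by metis
    have "k \<noteq> 1"
      using Hs by force
    moreover have "Or (Hs (Suc i mod k)) = f (Suc i mod k)" for i
      using Hs \<open>k \<ge> 1\<close> by simp
    ultimately show ?edge_cycle
      using Hs \<open>k \<ge> 1\<close> by (intro exI[of _ k] exI[of _ Hs]) auto
  qed
  then show ?thesis
    unfolding acyclic_orientation_def tranclp_cycle_iff[symmetric] tranclp_converse by auto
qed

lemma finite_acyclic_has_sink:
  assumes "finite S" "x \<in> S" "\<And>x. \<not> r\<^sup>+\<^sup>+ x x"
  obtains i where "i \<in> S" "\<And>y. y \<in> S \<Longrightarrow> \<not> r\<^sup>+\<^sup>+ i y"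
proof -
  define s where "s = {(u, v). u \<in> S \<and> v \<in> S \<and> r\<^sup>+\<^sup>+ v u}"
  have "trans s"
    unfolding s_def trans_def by (blast intro: tranclp_trans)
  then have "acyclic s"
    unfolding acyclic_def trancl_id[OF \<open>trans s\<close>] using assms(3) by (simp add: s_def)
  moreover have "finite s"
    using finite_subset[of s "S \<times> S"] assms(1) unfolding s_def by blast
  ultimately have "wf s"
    using finite_acyclic_wf by blast
  then obtain i where "i \<in> S" "\<And>y. (y, i) \<in> s \<Longrightarrow> y \<notin> S"
    using wfE_min[of s x S] assms(2) by blast
  then show thesis
    using that unfolding s_def by blast
qed

lemma no_cycle_if_none_through:
  assumes "\<And>u v. r u v \<Longrightarrow> v \<noteq> z \<Longrightarrow> s u v"
    and "\<And>x. \<not> s\<^sup>+\<^sup>+ x x" and "\<not> r\<^sup>+\<^sup>+ z z"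
  shows "\<not> r\<^sup>+\<^sup>+ x x"
proof
  have avoid_or_through: "s\<^sup>+\<^sup>+ x y \<or> (r\<^sup>*\<^sup>* x z \<and> r\<^sup>*\<^sup>* z y)" if "r\<^sup>+\<^sup>+ x y" for y
    using that
  proof (induction rule: tranclp_induct)
    case (base y)
    then show ?case
      using assms(1) by (cases "y = z") auto
  next
    case (step y y')
    then show ?case
      using assms(1)
      by (cases "y' = z") (auto intro: tranclp.trancl_into_trancl rtranclp.rtrancl_into_rtrancl
          dest: tranclp_into_rtranclp)
  qed
  assume cycle: "r\<^sup>+\<^sup>+ x x"
  then have "r\<^sup>*\<^sup>* x z \<and> r\<^sup>*\<^sup>* z x"
    using avoid_or_through assms(2) by blast
  then have "r\<^sup>+\<^sup>+ z z"
    using cycle by (meson rtranclp_tranclp_tranclp tranclp_rtranclp_tranclp)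
  with assms(3) show False ..
qed

definition safe_flip :: "nat set set \<Rightarrow> (nat set \<Rightarrow> nat) \<Rightarrow> nat \<Rightarrow> nat \<Rightarrow> bool" where
  "safe_flip \<I> A j i \<longleftrightarrow>
     (\<forall>G\<in>\<I>. i \<in> G \<longrightarrow> A G \<noteq> i \<longrightarrow> A G \<noteq> j \<longrightarrow> \<not> (arc \<I> A)\<^sup>*\<^sup>* (A G) j)"

lemma acyclic_orientation_flip:
  assumes acyclic: "acyclic_orientation \<I> A" and safe: "safe_flip \<I> A j i"
  shows "acyclic_orientation \<I> (flip A j i)"
proof -
  let ?R = "arc \<I> A" and ?B = "flip A j i"
  have R_acyclic: "\<not> ?R\<^sup>+\<^sup>+ x x" for x
    using acyclic by (simp add: acyclic_orientation_iff_arc)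
  have arc_flip: "?R u v \<or> (v = i \<and> ?R\<^sup>*\<^sup>* u j)" if B_arc: "arc \<I> ?B u v" for u v
  proof -
    obtain G where G: "G \<in> \<I>" "u \<in> G" "?B G = v" "u \<noteq> v"
      using B_arc unfolding arc_def by blast
    show ?thesis
    proof (cases "A G = j \<and> i \<in> G")
      case True
      then have "u = j \<or> ?R u j"
        using G unfolding arc_def by blast
      then show ?thesis
        using True G by (auto simp: flip_def)
    next
      case False
      then show ?thesis
        using G unfolding arc_def flip_def by auto
    qed
  qed
  have "\<not> (?R\<^sup>*\<^sup>* w j \<or> ?R\<^sup>*\<^sup>* w i)" if "(arc \<I> ?B)\<^sup>+\<^sup>+ i w" for w
    using that
  proof (induction rule: tranclp_induct)
    case (base w)
    then obtain G where G: "G \<in> \<I>" "i \<in> G" "?B G = w" "i \<noteq> w"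
      unfolding arc_def by blast
    then have "A G = w" "A G \<noteq> j"
      by (auto simp: flip_def split: if_splits)
    then have "?R i w" and "\<not> ?R\<^sup>*\<^sup>* w j"
      using G safe unfolding arc_def safe_flip_def by auto
    then show ?case
      using R_acyclic by (meson tranclp_rtranclp_tranclp tranclp.r_into_trancl)
  next
    case (step w w')
    then show ?case
      using arc_flip by (meson converse_rtranclp_into_rtranclp)
  qed
  then have B_acyclic_at_i: "\<not> (arc \<I> ?B)\<^sup>+\<^sup>+ i i"
    by (meson rtranclp.rtrancl_refl)
  have "\<not> (arc \<I> ?B)\<^sup>+\<^sup>+ x x" for x
  proof (rule no_cycle_if_none_through)
    show "?R u v" if "arc \<I> ?B u v" "v \<noteq> i" for u v
      using arc_flip[OF that(1)] that(2) by blast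
  qed (fact R_acyclic B_acyclic_at_i)+
  moreover have "orientation \<I> ?B"
    using acyclic unfolding acyclic_orientation_def orientation_def flip_def by simp
  ultimately show ?thesis
    unfolding acyclic_orientation_iff_arc by blast
qed

lemma Min_Max_atLeastAtMost:
  fixes a b :: nat
  assumes "a \<le> b"
  shows "Min {a..b} = a" and "Max {a..b} = b"
  using assms by (auto intro: Min_eqI Max_eqI)

lemma interval_hypergraph_memberD:
  assumes "interval_hypergraph n \<I>" and "I \<in> \<I>"
  shows "I = {Min I..Max I}" and "1 \<le> Min I" and "Min I \<le> Max I" and "Max I \<le> n"
proof -
  obtain a b where "1 \<le> a" "a \<le> b" "b \<le> n" "I = {a..b}"
    using assms unfolding interval_hypergraph_def is_interval_def by blast
  then show "I = {Min I..Max I}" "1 \<le> Min I" "Min I \<le> Max I" "Max I \<le> n"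
    using Min_Max_atLeastAtMost[of a b] by simp_all
qed

lemma distributive_crossing_intervals:
  assumes "distributive n \<I>" and "{c..d} \<in> \<I>" and "{a..b} \<in> \<I>"
    and "c < a" and "a \<le> d" and "d < b"
  shows "{a..d} \<in> \<I>" and "K \<in> \<I> \<Longrightarrow> {a..d} \<subseteq> K \<Longrightarrow> Min K = a \<or> Max K = d"
proof -
  have "{c..d} \<inter> {a..b} = {a..d}"
    using assms(4,6) by auto
  moreover have "\<not> {c..d} \<subseteq> {a..b}" and "\<not> {a..b} \<subseteq> {c..d}" and "{a..d} \<noteq> {}"
    using assms(4-6) by auto
  ultimately have "{a..d} \<in> \<I> \<and> (\<forall>K\<in>\<I>. {a..d} \<subseteq> K \<longrightarrow> initial_or_final {a..d} K)"
    using assms(1-3) unfolding distributive_def by metis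
  then show "{a..d} \<in> \<I>" and "K \<in> \<I> \<Longrightarrow> {a..d} \<subseteq> K \<Longrightarrow> Min K = a \<or> Max K = d"
    using Min_Max_atLeastAtMost[OF assms(5)] unfolding initial_or_final_def by auto
qed

locale distributive_flip =
  fixes n :: nat and \<I> :: "nat set set" and A :: "nat set \<Rightarrow> nat" and J :: "nat set"
  assumes distributive: "distributive n \<I>"
    and acyclic: "acyclic_orientation \<I> A"
    and J_member: "J \<in> \<I>"
    and head_J_ne_Min: "A J \<noteq> Min J"
begin

lemma interval_hypergraph: "interval_hypergraph n \<I>"
  using distributive unfolding distributive_def by blast

lemmas memberD = interval_hypergraph_memberD[OF interval_hypergraph]

lemma singleton_member: "1 \<le> k \<Longrightarrow> k \<le> n \<Longrightarrow> {k} \<in> \<I>"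
  using interval_hypergraph unfolding interval_hypergraph_def by simp

lemma atLeastAtMost_Min_Max: "I \<in> \<I> \<Longrightarrow> {Min I..Max I} = I"
  using memberD(1) by blast

lemma member_iff: "I \<in> \<I> \<Longrightarrow> x \<in> I \<longleftrightarrow> Min I \<le> x \<and> x \<le> Max I"
  using atLeastAtMost_Min_Max by fastforce

lemma head_member: "G \<in> \<I> \<Longrightarrow> A G \<in> G"
  using acyclic unfolding acyclic_orientation_def orientation_def by blast

lemma arc_acyclic: "\<not> (arc \<I> A)\<^sup>+\<^sup>+ x x"
  using acyclic by (simp add: acyclic_orientation_iff_arc)

lemma head_J_bounds: "Min J < A J" "A J \<le> Max J"
  using head_member[OF J_member] head_J_ne_Min member_iff[OF J_member] by auto

definition bound :: nat where
  "bound = Max {Max I | I. I \<in> \<I> \<and> Min I = Min J \<and> Max I < A J}"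

lemma
  shows le_bound: "{Min J..d} \<in> \<I> \<Longrightarrow> Min J \<le> d \<Longrightarrow> d < A J \<Longrightarrow> d \<le> bound"
    and segment_member: "{Min J..bound} \<in> \<I>"
    and Min_J_le_bound: "Min J \<le> bound"
    and bound_less_head_J: "bound < A J"
proof -
  let ?M = "{Max I | I. I \<in> \<I> \<and> Min I = Min J \<and> Max I < A J}"
  have "?M \<subseteq> {..n}"
    using memberD(4) by auto
  then have finite: "finite ?M"
    using finite_subset by blast
  show "d \<le> bound" if "{Min J..d} \<in> \<I>" "Min J \<le> d" "d < A J"
  proof -
    have "d \<in> ?M"
      using that Min_Max_atLeastAtMost[OF that(2)] by (intro CollectI exI[of _ "{Min J..d}"]) simp
    then show ?thesis
      unfolding bound_def using finite by simp
  qed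
  have "{Min J} \<in> \<I>"
    using singleton_member memberD(2-4)[OF J_member] by simp
  then have "Min J \<in> ?M"
    using head_J_bounds(1) by (intro CollectI exI[of _ "{Min J}"]) simp
  then show "Min J \<le> bound"
    unfolding bound_def using finite by simp
  have "bound \<in> ?M"
    unfolding bound_def using finite \<open>Min J \<in> ?M\<close> by (intro Max_in) auto
  then obtain K where K: "bound = Max K" "K \<in> \<I>" "Min K = Min J" "Max K < A J"
    by blast
  then show "bound < A J"
    by simp
  show "{Min J..bound} \<in> \<I>"
    using atLeastAtMost_Min_Max[OF K(2)] K by simp
qed

lemma Max_le_bound:
  assumes G: "G \<in> \<I>" "x \<in> G" "x \<in> {Min J..bound}" and "Max G < A J"
  shows "Max G \<le> bound"
proof (rule ccontr)
  assume "\<not> Max G \<le> bound"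
  have "Min G \<le> x" "x \<le> Max G"
    using G(2) member_iff[OF G(1)] by auto
  have G_ivl: "{Min G..Max G} \<in> \<I>" and J_ivl: "{Min J..Max J} \<in> \<I>"
    using G(1) J_member atLeastAtMost_Min_Max by simp_all
  consider "Min G = Min J" | "Min G < Min J" | "Min J < Min G"
    by linarith
  then show False
  proof cases
    case 1
    then show False
      using le_bound[of "Max G"] G_ivl G(3) \<open>x \<le> Max G\<close> \<open>Max G < A J\<close> \<open>\<not> Max G \<le> bound\<close> by auto
  next
    case 2
    have "Max G < Max J"
      using \<open>Max G < A J\<close> head_J_bounds by linarith
    then have "{Min J..Max G} \<in> \<I>"
      using distributive_crossing_intervals(1)[OF distributive G_ivl J_ivl 2] G(3) \<open>x \<le> Max G\<close> by auto
    then show False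
      using le_bound[of "Max G"] G(3) \<open>x \<le> Max G\<close> \<open>Max G < A J\<close> \<open>\<not> Max G \<le> bound\<close> by auto
  next
    case 3
    have "Min G \<le> bound" and "bound < Max G"
      using \<open>Min G \<le> x\<close> G(3) \<open>\<not> Max G \<le> bound\<close> by auto
    have "{Min G..bound} \<subseteq> {Min J..Max J}"
      using 3 bound_less_head_J head_J_bounds(2) by simp
    then have "Min J = Min G \<or> Max J = bound"
      using distributive_crossing_intervals(2)[OF distributive segment_member G_ivl 3
          \<open>Min G \<le> bound\<close> \<open>bound < Max G\<close> J_member] atLeastAtMost_Min_Max[OF J_member]
      by simp
    then show False
      using 3 bound_less_head_J head_J_bounds by linarith
  qed
qed

lemma no_edge_straddles_segment:
  assumes G: "G \<in> \<I>" "x \<in> G" "x \<in> {Min J..bound}" "Max G < A J" "Min G < Min J"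
    and K: "K \<in> \<I>" "u \<in> K" "u < Min J" "w \<in> K"
  shows "w \<le> bound"
proof (rule ccontr)
  assume "\<not> w \<le> bound"
  have "Max G \<le> bound"
    using Max_le_bound G(1-4) .
  have "Min K \<le> u" "w \<le> Max K"
    using K(2,4) member_iff[OF K(1)] by auto
  then have "Min K < Min J" and "Max G < Max K"
    using K(3) \<open>Max G \<le> bound\<close> \<open>\<not> w \<le> bound\<close> by linarith+
  then have "{Min J..Max G} \<subseteq> {Min K..Max K}"
    by simp
  then have "{Min J..Max G} \<subseteq> K"
    using atLeastAtMost_Min_Max[OF K(1)] by simp
  have G_ivl: "{Min G..Max G} \<in> \<I>" and J_ivl: "{Min J..Max J} \<in> \<I>"
    using G(1) J_member atLeastAtMost_Min_Max by simp_all
  have "Min J \<le> Max G"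
    using G(2,3) member_iff[OF G(1)] by auto
  moreover have "Max G < Max J"
    using G(4) head_J_bounds by linarith
  ultimately have "Min K = Min J \<or> Max K = Max G"
    using distributive_crossing_intervals(2)[OF distributive G_ivl J_ivl G(5) _ _ K(1)]
      \<open>{Min J..Max G} \<subseteq> K\<close> by blast
  with \<open>Min K < Min J\<close> \<open>Max G < Max K\<close> show False
    by linarith
qed

lemma exists_safe_flip:
  obtains i where "Min J \<le> i" and "i \<le> bound" and "safe_flip \<I> A (A J) i"
proof -
  let ?R = "arc \<I> A"
  obtain i where i: "i \<in> {Min J..bound}" and sink: "\<And>y. y \<in> {Min J..bound} \<Longrightarrow> \<not> ?R\<^sup>+\<^sup>+ i y"
    using finite_acyclic_has_sink[of "{Min J..bound}" "Min J" ?R] Min_J_le_bound arc_acyclic by auto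
  have "\<not> ?R\<^sup>*\<^sup>* (A G) (A J)" if G: "G \<in> \<I>" "i \<in> G" "A G \<noteq> i" "A G \<noteq> A J" for G
  proof
    assume "?R\<^sup>*\<^sup>* (A G) (A J)"
    then have path: "?R\<^sup>+\<^sup>+ (A G) (A J)"
      using G(4) by (meson rtranclpD)
    have i_arc: "?R i (A G)"
      unfolding arc_def using G by blast
    have "Min G \<le> i" and head_le: "A G \<le> Max G"
      using G(2) head_member[OF G(1)] member_iff[OF G(1)] by simp_all
    have "A J \<notin> G"
    proof
      assume "A J \<in> G"
      then have "?R (A J) (A G)"
        unfolding arc_def using G by metis
      with path show False
        using arc_acyclic by (meson tranclp_into_tranclp2)
    qed
    then have "Max G < A J"
      using member_iff[OF G(1)] \<open>Min G \<le> i\<close> i bound_less_head_J by simp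
    then have "Max G \<le> bound"
      using Max_le_bound G(1,2) i by blast
    moreover have "A G \<notin> {Min J..bound}"
      using sink i_arc by (meson tranclp.r_into_trancl)
    ultimately have "A G < Min J"
      using head_le by simp
    then have "Min G < Min J"
      using head_member[OF G(1)] member_iff[OF G(1)] by simp
    have stays_below: "w < Min J" if u: "u < Min J" and uw: "?R u w" and iw: "?R\<^sup>+\<^sup>+ i w" for u w
    proof -
      obtain K where "K \<in> \<I>" "u \<in> K" "A K = w"
        using uw unfolding arc_def by blast
      then have "w \<le> bound"
        using no_edge_straddles_segment[OF G(1,2) i \<open>Max G < A J\<close> \<open>Min G < Min J\<close>]
          head_member u by blast
      then show "w < Min J"
        using sink[of w] iw by (meson atLeastAtMost_iff not_le)
    qed
    have "w < Min J" if "?R\<^sup>+\<^sup>+ (A G) w" for w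
      using that
    proof (induction rule: tranclp_induct)
      case (base w)
      then show ?case
        using stays_below \<open>A G < Min J\<close> i_arc by (meson tranclp.r_into_trancl tranclp_into_tranclp2)
    next
      case (step w w')
      then show ?case
        using stays_below i_arc by (meson tranclp.trancl_into_trancl tranclp_into_tranclp2)
    qed
    with path show False
      using head_J_bounds by fastforce
  qed
  then show thesis
    using that i unfolding safe_flip_def by auto
qed

end

theorem proposition5p23:
  fixes n :: nat and \<I> :: "nat set set" and A :: "nat set \<Rightarrow> nat" and J :: "nat set"
  assumes "distributive n \<I>"
    and "acyclic_orientation \<I> A"
    and "J \<in> \<I>"
    and "A J \<noteq> Min J"
  shows "\<exists>i. Min J \<le> i \<and>
             i \<le> Max {Max I | I. I \<in> \<I> \<and> Min I = Min J \<and> Max I < A J} \<and>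
             acyclic_orientation \<I> (flip A (A J) i)"
proof -
  interpret distributive_flip n \<I> A J
    using assms by unfold_locales
  obtain i where "Min J \<le> i" and "i \<le> bound" and "safe_flip \<I> A (A J) i"
    by (rule exists_safe_flip)
  then show ?thesis
    using acyclic_orientation_flip[OF assms(2)] unfolding bound_def by blast
qed

end
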